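(* Fix $p\in(0,1)$ and let $D_n$ be the degree of the source of a random series-parallel network of size $n$ generated by the Bernoulli model with parameter $p$. For every $r\ge 1$ and $n\ge1$, $$\mathbb{E}\big(D_n^{\underline r}\big)=r!\sum_{j=0}^{r-1}\binom{r-1}{j}(-1)^{r-1-j}\binom{n+p(j+1)-1}{n-1},$$ where $D_n^{\underline r}=D_n(D_n-1)\cdots(D_n-r+1)$; consequently $\mathbb{E}(D_n^{\underline r})\sim \dfrac{r!\,n^{rp}}{\Gamma(rp+1)}$ as $n\to\infty$. Moreover, the probability generating function satisfies $$\sum_{n\ge1}\sum_{m}\mathbb{P}\{D_n=m\}z^{n-1}v^m=\frac{v}{v(1-z)+(1-v)(1-z)^{1-p}}.$$
   Context: Bernoulli model of series-parallel networks with parameter $p\in(0,1)$, $q=1-p$: at step $1$ the network is a single edge labelled $1$ from the source to the sink. At step $n>1$ one of the $n-1$ existing edges is chosen uniformly at random, say edge $j=(x,y)$; with probability $p$ a new parallel edge $(x,y)$ labelled $n$ is added, and with probability $q$ edge $(x,y)$ is replaced by edges $(x,z)$ labelled $j$ and $(z,y)$ labelled $n$, with $z$ a new vertex. The network after step $n$ has size $n$. The degree of the source is its out-degree. Binomial coefficients with real upper argument: $\binom{a}{k}=a(a-1)\cdots(a-k+1)/k!$. *)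

theory Defs
  imports "HOL-Probability.Probability"
begin

text \<open>A series-parallel network state: the list of edges (edge with label i+1 is
  the i-th list element, given as (tail, head)) and the next fresh vertex name.
  The source is vertex 0, the sink is vertex 1.\<close>
type_synonym spnet = "(nat \<times> nat) list \<times> nat"

definition sp_step :: "real \<Rightarrow> spnet \<Rightarrow> spnet pmf" where
  "sp_step p s = (case s of (es, w) \<Rightarrow>
     do { j \<leftarrow> pmf_of_set {..<length es};
          b \<leftarrow> bernoulli_pmf p;
          return_pmf (if b then (es @ [es ! j], w)
                      else (es[j := (fst (es ! j), w)] @ [(w, snd (es ! j))], Suc w)) })"

text \<open>Network after k steps beyond the first, i.e. of size k+1.\<close>
primrec sp_net_aux :: "real \<Rightarrow> nat \<Rightarrow> spnet pmf" where
  "sp_net_aux p 0 = return_pmf ([(0, 1)], 2)"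
| "sp_net_aux p (Suc k) = sp_net_aux p k \<bind> sp_step p"

text \<open>Random network of size n (meaningful for n \<ge> 1).\<close>
definition sp_net :: "real \<Rightarrow> nat \<Rightarrow> spnet pmf" where
  "sp_net p n = sp_net_aux p (n - 1)"

definition source_degree :: "spnet \<Rightarrow> nat" where
  "source_degree s = length (filter (\<lambda>e. fst e = 0) (fst s))"

definition D :: "real \<Rightarrow> nat \<Rightarrow> nat pmf" where
  "D p n = map_pmf source_degree (sp_net p n)"

definition falling :: "real \<Rightarrow> nat \<Rightarrow> real" where
  "falling x r = (\<Prod>i<r. x - real i)"

end

theory Submission
  imports Defs
begin

text \<open>If the network of size n has source degree d, the next step raises the degree by one
  exactly when an edge leaving the source is chosen (probability d/n) and doubled (probability p);
  a subdivision keeps the tail of the chosen edge and gives the new edge a fresh tail. Hence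
  E f(D (n+1)) = E [f(D n) + p (D n)/n (f(D n + 1) - f(D n))] for every f. For falling factorials
  and for point masses this gives first-order linear recurrences in n, solved by alternating
  binomial sums of the coefficients (k+a choose k), which obey a recurrence of the same shape in k.
  Since (k+a choose k) ~ k^a / Gamma(a+1), the top term of the moment sum dominates; and since
  the sum over k of (k-a choose k) z^k is (1-z)^(a-1), the column sums of the generating function
  form a geometric series in v.\<close>

section \<open>The one-step recurrence for the source degree\<close>

lemma source_degree_snoc:
  "source_degree (es @ [e], w) = source_degree (es, w) + (if fst e = 0 then 1 else 0)"
  by (simp add: source_degree_def)

lemma length_filter_list_update:
  "j < length xs \<Longrightarrow> P x = P (xs ! j) \<Longrightarrow>
   length (filter P (xs[j := x])) = length (filter P xs)"
  by (induction xs arbitrary: j) (auto split: nat.splits)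

lemma set_pmf_sp_step:
  assumes "s \<in> set_pmf (sp_step p (es, w))" "es \<noteq> []"
  shows "length (fst s) = Suc (length es) \<and> w \<le> snd s"
  using assms by (auto simp: sp_step_def split: if_splits)

lemma finite_set_pmf_sp_step:
  assumes "es \<noteq> []"
  shows "finite (set_pmf (sp_step p (es, w)))"
proof -
  have "set_pmf (pmf_of_set {..<length es}) = {..<length es}"
    using assms by (intro set_pmf_of_set) auto
  then show ?thesis unfolding sp_step_def by auto
qed

lemma set_pmf_sp_net_aux:
  "s \<in> set_pmf (sp_net_aux p k) \<Longrightarrow> length (fst s) = Suc k \<and> 0 < snd s"
proof (induction k arbitrary: s)
  case (Suc k)
  then obtain es w where "(es, w) \<in> set_pmf (sp_net_aux p k)" "s \<in> set_pmf (sp_step p (es, w))"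
    by auto
  moreover from Suc.IH[OF this(1)] have "length es = Suc k" "0 < w" by auto
  ultimately show ?case using set_pmf_sp_step[of s p es w] by fastforce
qed simp

lemma finite_set_pmf_sp_step_reachable:
  assumes "s \<in> set_pmf (sp_net_aux p k)"
  shows "finite (set_pmf (sp_step p s))"
proof -
  have "fst s \<noteq> []" using set_pmf_sp_net_aux[OF assms] by auto
  then show ?thesis using finite_set_pmf_sp_step[of "fst s" p "snd s"] by simp
qed

lemma finite_set_pmf_sp_net_aux: "finite (set_pmf (sp_net_aux p k))"
  by (induction k) (auto intro: finite_set_pmf_sp_step_reachable)

lemma finite_set_pmf_D: "finite (set_pmf (D p n))"
  by (simp add: D_def sp_net_def finite_set_pmf_sp_net_aux)

lemma set_pmf_D_Suc: "set_pmf (D p (Suc n)) \<subseteq> {..Suc n}"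
proof
  fix m assume "m \<in> set_pmf (D p (Suc n))"
  then obtain s where s: "s \<in> set_pmf (sp_net_aux p n)" "m = source_degree s"
    by (auto simp: D_def sp_net_def)
  have "source_degree s \<le> length (fst s)"
    unfolding source_degree_def by (rule length_filter_le)
  then show "m \<in> {..Suc n}" using s set_pmf_sp_net_aux[OF s(1)] by simp
qed

lemma D_1: "D p (Suc 0) = return_pmf 1"
  by (simp add: D_def sp_net_def source_degree_def)

text \<open>The hypothesis 0 < w says that the fresh vertex is not the source.\<close>

lemma expectation_sp_step:
  fixes f :: "nat \<Rightarrow> real"
  assumes "es \<noteq> []" "0 < w" "0 \<le> p" "p \<le> 1"
  defines "d \<equiv> source_degree (es, w)"
  shows "measure_pmf.expectation (sp_step p (es, w)) (\<lambda>s. f (source_degree s)) =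
         f d + p * real d / real (length es) * (f (Suc d) - f d)"
proof -
  define n where "n = length es"
  define h where "h j b = (if b then (es @ [es ! j], w)
                    else (es[j := (fst (es ! j), w)] @ [(w, snd (es ! j))], Suc w))" for j b
  define \<delta> where "\<delta> j = (if fst (es ! j) = 0 then f (Suc d) - f d else 0)" for j
  have n: "0 < n" using assms(1) by (simp add: n_def)
  have step: "sp_step p (es, w) = pmf_of_set {..<n} \<bind> (\<lambda>j. map_pmf (h j) (bernoulli_pmf p))"
    by (simp add: sp_step_def h_def n_def map_pmf_def)
  have edge: "measure_pmf.expectation (bernoulli_pmf p) (\<lambda>b. f (source_degree (h j b)))
      = f d + p * \<delta> j" if "j < n" for j
  proof -
    have "source_degree (h j True) = d + (if fst (es ! j) = 0 then 1 else 0)"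
      by (simp add: h_def d_def source_degree_snoc)
    moreover have "source_degree (h j False) = d"
      using that assms(2) by (simp add: h_def d_def n_def source_degree_def length_filter_list_update)
    ultimately show ?thesis using assms(3,4) by (simp add: \<delta>_def algebra_simps)
  qed
  have card: "card {j \<in> {..<n}. fst (es ! j) = 0} = d"
    by (simp add: d_def n_def source_degree_def length_filter_conv_card conj_commute)
  have "measure_pmf.expectation (sp_step p (es, w)) (\<lambda>s. f (source_degree s))
      = (\<Sum>j<n. (f d + p * \<delta> j) / real n)"
    unfolding step using n
    by (subst pmf_expectation_bind_pmf_of_set) (auto simp: edge divide_inverse_commute intro!: sum.cong)
  also have "\<dots> = f d + p / real n * (\<Sum>j<n. \<delta> j)"
    using n by (simp add: sum.distrib sum_divide_distrib[symmetric] sum_distrib_left[symmetric]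
                          field_simps)
  also have "(\<Sum>j<n. \<delta> j) = real d * (f (Suc d) - f d)"
    using card by (simp add: \<delta>_def sum.inter_filter[symmetric])
  finally show ?thesis by (simp add: n_def)
qed

lemma expectation_D_Suc:
  fixes f :: "nat \<Rightarrow> real"
  assumes "0 \<le> p" "p \<le> 1" "1 \<le> n"
  shows "measure_pmf.expectation (D p (Suc n)) f =
         measure_pmf.expectation (D p n) (\<lambda>d. f d + p * real d / real n * (f (Suc d) - f d))"
proof -
  obtain k where k: "n = Suc k" using assms(3) by (cases n) auto
  let ?M = "sp_net_aux p k"
  let ?g = "\<lambda>d. f d + p * real d / real n * (f (Suc d) - f d)"
  have "measure_pmf.expectation (D p (Suc n)) f
      = measure_pmf.expectation (?M \<bind> sp_step p) (\<lambda>s. f (source_degree s))"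
    by (simp add: D_def sp_net_def k)
  also have "\<dots> = (\<Sum>s\<in>set_pmf ?M. pmf ?M s *\<^sub>R
                    measure_pmf.expectation (sp_step p s) (\<lambda>s. f (source_degree s)))"
    by (intro pmf_expectation_bind finite_set_pmf_sp_net_aux finite_set_pmf_sp_step_reachable) simp_all
  also have "\<dots> = (\<Sum>s\<in>set_pmf ?M. pmf ?M s * ?g (source_degree s))"
  proof (intro sum.cong refl)
    fix s assume "s \<in> set_pmf ?M"
    from set_pmf_sp_net_aux[OF this]
    obtain es w where "s = (es, w)" "length es = n" "0 < w" "es \<noteq> []"
      by (cases s) (fastforce simp: k)
    then show "pmf ?M s *\<^sub>R measure_pmf.expectation (sp_step p s) (\<lambda>s. f (source_degree s)) =
               pmf ?M s * ?g (source_degree s)"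
      using expectation_sp_step[of es w p f] assms by simp
  qed
  also have "\<dots> = measure_pmf.expectation (D p n) ?g"
    unfolding D_def sp_net_def integral_map_pmf
    by (subst integral_measure_pmf_real[OF finite_set_pmf_sp_net_aux]) (auto simp: k mult.commute)
  finally show ?thesis .
qed

section \<open>Alternating sums of binomial coefficients\<close>

definition negbinom :: "real \<Rightarrow> nat \<Rightarrow> real" where
  "negbinom a k = (real k + a) gchoose k"

lemma negbinom_0 [simp]: "negbinom a 0 = 1"
  by (simp add: negbinom_def)

lemma negbinom_Suc: "negbinom a (Suc k) = (1 + a / real (Suc k)) * negbinom a k"
proof -
  have "real (Suc k) * ((real (Suc k) + a) gchoose Suc k) =
        (real (Suc k) + a) * ((real (Suc k) + a - 1) gchoose k)"
    by (rule gbinomial_absorption)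
  then show ?thesis by (simp add: negbinom_def field_simps)
qed

lemma sum_choose_mult_absorb:
  fixes x :: "nat \<Rightarrow> real"
  shows "(\<Sum>j\<le>s. real (s choose j) * real (s - j) * x j) =
         real s * (\<Sum>j\<le>s - 1. real (s - 1 choose j) * x j)"
proof (cases s)
  case (Suc s')
  have "(\<Sum>j\<le>s. real (s choose j) * real (s - j) * x j) =
        (\<Sum>j\<le>s'. real (s choose j) * real (s - j) * x j)"
    by (simp add: Suc)
  also have "\<dots> = real s * (\<Sum>j\<le>s'. real (s' choose j) * x j)"
    unfolding sum_distrib_left
  proof (intro sum.cong refl)
    fix j
    have "(s - j) * (s choose j) = s * (s' choose j)"
      using binomial_absorb_comp[of s j] by (simp add: Suc)
    then have "real (s choose j) * real (s - j) = real s * real (s' choose j)"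
      by (metis of_nat_mult mult.commute)
    then show "real (s choose j) * real (s - j) * x j = real s * (real (s' choose j) * x j)"
      by simp
  qed
  finally show ?thesis by (simp add: Suc)
qed simp

text \<open>Write j + 1 = (s + 1) - (s - j) and absorb the factor s - j.\<close>

lemma sum_choose_mult_affine:
  fixes x :: "nat \<Rightarrow> real"
  shows "(\<Sum>j\<le>s. real (s choose j) * (\<alpha> + \<beta> * real (j + 1)) * x j) =
         (\<alpha> + \<beta> * real (s + 1)) * (\<Sum>j\<le>s. real (s choose j) * x j)
         - \<beta> * real s * (\<Sum>j\<le>s - 1. real (s - 1 choose j) * x j)"
proof -
  have "(\<Sum>j\<le>s. real (s choose j) * (\<alpha> + \<beta> * real (j + 1)) * x j) =
        (\<Sum>j\<le>s. (\<alpha> + \<beta> * real (s + 1)) * (real (s choose j) * x j)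
                 - \<beta> * (real (s choose j) * real (s - j) * x j))"
    by (intro sum.cong refl) (auto simp: algebra_simps)
  also have "\<dots> = (\<alpha> + \<beta> * real (s + 1)) * (\<Sum>j\<le>s. real (s choose j) * x j)
                 - \<beta> * (\<Sum>j\<le>s. real (s choose j) * real (s - j) * x j)"
    by (simp add: sum_subtractf sum_distrib_left)
  finally show ?thesis unfolding sum_choose_mult_absorb by simp
qed

text \<open>Shifted indices: the r-th factorial moment of D (k+1) is r! moment_sum p (r-1) k, and
  P(D (n+1) = t+1) = point_sum p t n.\<close>

definition moment_sum :: "real \<Rightarrow> nat \<Rightarrow> nat \<Rightarrow> real" where
  "moment_sum p s k =
     (\<Sum>j\<le>s. real (s choose j) * (-1) ^ (s - j) * negbinom (p * real (j + 1)) k)"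

definition point_sum :: "real \<Rightarrow> nat \<Rightarrow> nat \<Rightarrow> real" where
  "point_sum p t n =
     (\<Sum>j\<le>t. real (t choose j) * (-1) ^ j * negbinom (- p * real (j + 1)) n)"

lemma moment_sum_Suc:
  "moment_sum p s (Suc k) = (1 + p * real (s + 1) / real (Suc k)) * moment_sum p s k
                            + p * real s / real (Suc k) * moment_sum p (s - 1) k"
proof -
  define x where "x j = (-1) ^ (s - j) * negbinom (p * real (j + 1)) k" for j
  have "moment_sum p s (Suc k) =
        (\<Sum>j\<le>s. real (s choose j) * (1 + p / real (Suc k) * real (j + 1)) * x j)"
    unfolding moment_sum_def negbinom_Suc x_def by (intro sum.cong refl) (simp add: field_simps)
  also have "\<dots> = (1 + p * real (s + 1) / real (Suc k)) * moment_sum p s k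
      - p / real (Suc k) * (real s * (\<Sum>j\<le>s - 1. real (s - 1 choose j) * x j))"
    unfolding sum_choose_mult_affine by (simp add: moment_sum_def x_def mult_ac)
  also have "real s * (\<Sum>j\<le>s - 1. real (s - 1 choose j) * x j) =
             - (real s * moment_sum p (s - 1) k)"
  proof (cases s)
    case (Suc s')
    have "(\<Sum>j\<le>s'. real (s' choose j) * x j) = - moment_sum p s' k"
      unfolding moment_sum_def sum_negf[symmetric]
      by (intro sum.cong refl) (simp add: x_def Suc Suc_diff_le)
    then show ?thesis by (simp add: Suc)
  qed simp
  finally show ?thesis by simp
qed

lemma point_sum_Suc:
  "point_sum p t (Suc n) = (1 - p * real (t + 1) / real (Suc n)) * point_sum p t n
                           + p * real t / real (Suc n) * point_sum p (t - 1) n"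
proof -
  define x where "x j = (-1) ^ j * negbinom (- p * real (j + 1)) n" for j
  have "point_sum p t (Suc n) =
        (\<Sum>j\<le>t. real (t choose j) * (1 + - p / real (Suc n) * real (j + 1)) * x j)"
    unfolding point_sum_def negbinom_Suc x_def by (intro sum.cong refl) (simp add: field_simps)
  also have "\<dots> = (1 - p * real (t + 1) / real (Suc n)) * point_sum p t n
      + p * real t / real (Suc n) * point_sum p (t - 1) n"
    unfolding sum_choose_mult_affine by (simp add: point_sum_def x_def mult_ac)
  finally show ?thesis .
qed
section \<open>Factorial moments and point probabilities\<close>

lemma falling_Suc: "falling x (Suc r) = falling x r * (x - real r)"
  by (simp add: falling_def)

lemma falling_Suc_shift: "falling (x + 1) (Suc r) = (x + 1) * falling x r"
  unfolding falling_def prod.lessThan_Suc_shift by simp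

lemma falling_of_nat_eq_0: "m < r \<Longrightarrow> falling (real m) r = 0"
  unfolding falling_def by (rule prod_zero) auto

lemma mult_falling_difference:
  "x * (falling (x + 1) r - falling x r) =
   real r * falling x r + real r * real (r - 1) * falling x (r - 1)"
proof (cases r)
  case (Suc s)
  show ?thesis
    unfolding Suc falling_Suc_shift[of x s] falling_Suc[of x s] by (simp add: algebra_simps)
qed (simp add: falling_def)

lemma factorial_moment_D_Suc:
  assumes "0 \<le> p" "p \<le> 1" "1 \<le> n"
  shows "measure_pmf.expectation (D p (Suc n)) (\<lambda>d. falling (real d) r) =
         (1 + p * real r / real n) * measure_pmf.expectation (D p n) (\<lambda>d. falling (real d) r)
         + p * real r * real (r - 1) / real n *
           measure_pmf.expectation (D p n) (\<lambda>d. falling (real d) (r - 1))"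
proof -
  have "falling (real d) r + p * real d / real n * (falling (real (Suc d)) r - falling (real d) r)
      = (1 + p * real r / real n) * falling (real d) r
        + p * real r * real (r - 1) / real n * falling (real d) (r - 1)" for d
    using mult_falling_difference[of "real d" r] assms(3) by (simp add: field_simps)
  moreover have "integrable (measure_pmf (D p n)) g" for g :: "nat \<Rightarrow> real"
    by (rule integrable_measure_pmf_finite[OF finite_set_pmf_D])
  ultimately show ?thesis
    by (simp add: expectation_D_Suc[OF assms])
qed

lemma factorial_moment_D:
  assumes "0 \<le> p" "p \<le> 1"
  shows "measure_pmf.expectation (D p (Suc k)) (\<lambda>d. falling (real d) (Suc s)) =
         fact (Suc s) * moment_sum p s k"
proof (induction k arbitrary: s)
  case 0
  have "(\<Sum>j\<le>s. real (s choose j) * (-1) ^ (s - j)) = (0::real) ^ s"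
    using binomial_ring[of "1::real" "-1" s] by simp
  moreover have "falling 1 (Suc s) = (0::real) ^ s"
    using falling_of_nat_eq_0[of 1 "Suc s"] by (cases s) (auto simp: falling_def)
  ultimately show ?case
    by (cases s) (simp_all add: D_1 moment_sum_def)
next
  case (Suc k)
  let ?E = "\<lambda>n r. measure_pmf.expectation (D p n) (\<lambda>d. falling (real d) r)"
  have lower: "real s * ?E (Suc k) s = real s * (fact s * moment_sum p (s - 1) k)"
    by (cases s) (simp_all add: Suc.IH)
  have "?E (Suc (Suc k)) (Suc s) =
        (1 + p * real (Suc s) / real (Suc k)) * ?E (Suc k) (Suc s)
        + p * real (Suc s) / real (Suc k) * (real s * ?E (Suc k) s)"
    using factorial_moment_D_Suc[OF assms, of "Suc k" "Suc s"] by simp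
  also have "\<dots> = fact (Suc s) * moment_sum p s (Suc k)"
    unfolding Suc.IH lower moment_sum_Suc by (simp add: field_simps)
  finally show ?case .
qed

lemma expectation_indicator_singleton:
  "measure_pmf.expectation M (\<lambda>d. if d = m then c else 0) = c * pmf M m"
  by (subst integral_measure_pmf_real[of "{m}"]) (auto split: if_splits)

text \<open>For m = 0 the truncated m - 1 makes the second summand vanish.\<close>

lemma pmf_D_Suc:
  assumes "0 \<le> p" "p \<le> 1" "1 \<le> n"
  shows "pmf (D p (Suc n)) m = (1 - p * real m / real n) * pmf (D p n) m
                               + p * real (m - 1) / real n * pmf (D p n) (m - 1)"
proof -
  let ?ind = "\<lambda>m d. if d = m then 1 else 0 :: real"
  have "pmf (D p (Suc n)) m = measure_pmf.expectation (D p (Suc n)) (?ind m)"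
    by (simp add: expectation_indicator_singleton)
  also have "\<dots> = measure_pmf.expectation (D p n)
                     (\<lambda>d. ?ind m d + p * real d / real n * (?ind m (Suc d) - ?ind m d))"
    by (rule expectation_D_Suc[OF assms])
  also have "(\<lambda>d. ?ind m d + p * real d / real n * (?ind m (Suc d) - ?ind m d)) =
             (\<lambda>d. (if d = m then 1 - p * real m / real n else 0)
                  + (if d = m - 1 then p * real (m - 1) / real n else 0))"
    by (cases m) (auto simp: fun_eq_iff)
  also have "measure_pmf.expectation (D p n) \<dots> = (1 - p * real m / real n) * pmf (D p n) m
                               + p * real (m - 1) / real n * pmf (D p n) (m - 1)"
    by (simp add: expectation_indicator_singleton integrable_measure_pmf_finite[OF finite_set_pmf_D])
  finally show ?thesis .
qed

lemma pmf_D_Suc_0: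
  assumes "0 \<le> p" "p \<le> 1"
  shows "pmf (D p (Suc n)) 0 = 0"
  by (induction n) (simp_all add: D_1 pmf_D_Suc[OF assms])

lemma pmf_D_Suc_Suc:
  assumes "0 \<le> p" "p \<le> 1"
  shows "pmf (D p (Suc n)) (Suc t) = point_sum p t n"
proof (induction n arbitrary: t)
  case 0
  have "(\<Sum>j\<le>t. real (t choose j) * (-1) ^ j) = (0::real) ^ t"
    using binomial_ring[of "-1::real" 1 t] by simp
  then show ?case by (cases t) (simp_all add: D_1 point_sum_def)
next
  case (Suc n)
  have lower: "real t * pmf (D p (Suc n)) t = real t * point_sum p (t - 1) n"
    by (cases t) (simp_all add: Suc.IH)
  have "pmf (D p (Suc (Suc n))) (Suc t) =
        (1 - p * real (Suc t) / real (Suc n)) * pmf (D p (Suc n)) (Suc t)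
        + p / real (Suc n) * (real t * pmf (D p (Suc n)) t)"
    using pmf_D_Suc[OF assms, of "Suc n" "Suc t"] by simp
  also have "\<dots> = point_sum p t (Suc n)"
    unfolding Suc.IH lower point_sum_Suc by (simp add: field_simps)
  finally show ?case .
qed

section \<open>Asymptotics and the generating function\<close>

lemma negbinom_limit:
  assumes "0 < a"
  shows "(\<lambda>k. negbinom a k / real (Suc k) powr a) \<longlonglongrightarrow> 1 / Gamma (a + 1)"
proof -
  have "Gamma a \<noteq> 0" using Gamma_real_pos[OF assms] by simp
  then have "(\<lambda>k. 1 / (a * Gamma_series' a (Suc k))) \<longlonglongrightarrow> 1 / (a * Gamma a)"
    using assms by (intro tendsto_intros LIMSEQ_Suc[OF Gamma_series'_LIMSEQ]) auto
  moreover have "a * Gamma a = Gamma (a + 1)"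
    using assms by (intro Gamma_plus1[symmetric]) (auto elim!: nonpos_Ints_cases)
  moreover have "1 / (a * Gamma_series' a (Suc k)) = negbinom a k / real (Suc k) powr a" for k
  proof -
    have "negbinom a k = pochhammer (a + 1) k / fact k"
      unfolding negbinom_def gbinomial_pochhammer' by (simp add: add_ac)
    moreover have "pochhammer a (Suc k) = a * pochhammer (a + 1) k" by (rule pochhammer_rec)
    moreover have "exp (a * ln (real (Suc k))) = real (Suc k) powr a"
      by (simp add: powr_def mult_ac)
    ultimately show ?thesis
      unfolding Gamma_series'_def using assms by (simp add: field_simps)
  qed
  ultimately show ?thesis by simp
qed

lemma moment_sum_limit:
  fixes p :: real and s :: nat
  assumes "0 < p"
  defines "c \<equiv> real (Suc s) * p"
  shows "(\<lambda>k. moment_sum p s k / real (Suc k) powr c) \<longlonglongrightarrow> 1 / Gamma (c + 1)"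
proof -
  define a where "a j = p * real (j + 1)" for j
  have term_limit: "(\<lambda>k. negbinom (a j) k / real (Suc k) powr c)
      \<longlonglongrightarrow> (if j = s then 1 / Gamma (c + 1) else 0)" if "j \<le> s" for j
  proof -
    have "(\<lambda>k. negbinom (a j) k / real (Suc k) powr a j * real (Suc k) powr (a j - c))
        \<longlonglongrightarrow> 1 / Gamma (a j + 1) * (if j = s then 1 else 0)"
    proof (intro tendsto_mult negbinom_limit)
      show "0 < a j" using assms by (simp add: a_def)
      have "a j - c < 0" if "j < s"
        using \<open>0 < p\<close> that by (simp add: a_def c_def algebra_simps)
      moreover have "filterlim (\<lambda>k. real (Suc k)) at_top sequentially"
        by (rule filterlim_compose[OF filterlim_real_sequentially filterlim_Suc])
      ultimately show "(\<lambda>k. real (Suc k) powr (a j - c)) \<longlonglongrightarrow> (if j = s then 1 else 0)"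
        using \<open>j \<le> s\<close> by (auto simp: a_def c_def mult.commute intro: tendsto_neg_powr)
    qed
    moreover have "1 / Gamma (a j + 1) * (if j = s then 1 else 0) =
                   (if j = s then 1 / Gamma (c + 1) else 0)"
      by (simp add: a_def c_def mult.commute)
    moreover have "negbinom (a j) k / real (Suc k) powr a j * real (Suc k) powr (a j - c)
                   = negbinom (a j) k / real (Suc k) powr c" for k
      by (simp add: powr_diff)
    ultimately show ?thesis by simp
  qed
  have "(\<lambda>k. \<Sum>j\<le>s. real (s choose j) * (-1) ^ (s - j) *
                    (negbinom (a j) k / real (Suc k) powr c))
      \<longlonglongrightarrow> (\<Sum>j\<le>s. real (s choose j) * (-1) ^ (s - j) *
                    (if j = s then 1 / Gamma (c + 1) else 0))"
    by (intro tendsto_sum tendsto_mult_left term_limit) simp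
  then show ?thesis
    by (simp add: moment_sum_def a_def sum_divide_distrib if_distrib[of "\<lambda>x. _ * x"] cong: if_cong)
qed

lemma factorial_moment_D_asymp:
  fixes p :: real and s :: nat
  assumes "0 < p" "p \<le> 1"
  defines "c \<equiv> real (Suc s) * p"
  shows "(\<lambda>n. measure_pmf.expectation (D p n) (\<lambda>d. falling (real d) (Suc s)))
           \<sim>[at_top] (\<lambda>n. fact (Suc s) * real n powr c / Gamma (c + 1))"
proof (rule asymp_equivI', rule LIMSEQ_imp_Suc)
  have "0 < c" using assms by (simp add: c_def)
  then have "Gamma (c + 1) > 0" by (intro Gamma_real_pos) simp
  then have "(\<lambda>k. Gamma (c + 1) * (moment_sum p s k / real (Suc k) powr c)) \<longlonglongrightarrow> 1"
    using tendsto_mult_left[OF moment_sum_limit[OF assms(1)], of "Gamma (c + 1)" s] by (simp add: c_def)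
  then show "(\<lambda>k. measure_pmf.expectation (D p (Suc k)) (\<lambda>d. falling (real d) (Suc s)) /
               (fact (Suc s) * real (Suc k) powr c / Gamma (c + 1))) \<longlonglongrightarrow> 1"
    using assms by (simp add: factorial_moment_D field_simps del: fact_Suc)
qed

lemma negbinom_sums:
  fixes z :: real
  assumes "\<bar>z\<bar> < 1"
  shows "(\<lambda>n. negbinom a n * z ^ n) sums ((1 - z) powr (- (a + 1)))"
proof -
  have "(\<lambda>n. ((- (a + 1)) gchoose n) * (- z) ^ n) sums (1 + - z) powr (- (a + 1))"
    using assms by (intro gen_binomial_real) simp
  moreover have "negbinom a n = (- 1) ^ n * ((- (a + 1)) gchoose n)" for n
    using gbinomial_minus'[of a n] by (simp add: negbinom_def add.commute)
  then have "((- (a + 1)) gchoose n) * (- z) ^ n = negbinom a n * z ^ n" for n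
    by (simp add: power_minus[of z])
  ultimately show ?thesis by simp
qed

lemma point_sum_sums:
  fixes z :: real
  assumes "\<bar>z\<bar> < 1"
  shows "(\<lambda>n. point_sum p t n * z ^ n) sums ((1 - z) powr (p - 1) * (1 - (1 - z) powr p) ^ t)"
proof -
  define w where "w = 1 - z"
  have "w > 0" using assms by (simp add: w_def)
  have "(\<lambda>n. negbinom (- p * real (j + 1)) n * z ^ n) sums (w powr (p * real (j + 1) - 1))" for j
    using negbinom_sums[OF assms, of "- p * real (j + 1)"] by (simp add: w_def)
  then have "(\<lambda>n. \<Sum>j\<le>t. real (t choose j) * (-1) ^ j * (negbinom (- p * real (j + 1)) n * z ^ n))
      sums (\<Sum>j\<le>t. real (t choose j) * (-1) ^ j * w powr (p * real (j + 1) - 1))"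
    by (intro sums_sum sums_mult)
  moreover have "(\<Sum>j\<le>t. real (t choose j) * (-1) ^ j * w powr (p * real (j + 1) - 1))
      = w powr (p - 1) * (1 - w powr p) ^ t"
  proof -
    have "w powr (p * real (j + 1) - 1) = w powr (p - 1) * (w powr p) ^ j" for j
    proof -
      have exponent: "p * real (j + 1) - 1 = (p - 1) + real j * p" by (simp add: algebra_simps)
      have "(w powr p) ^ j = w powr (real j * p)" using \<open>w > 0\<close> by (simp add: powr_power)
      then show ?thesis by (simp only: exponent powr_add)
    qed
    moreover have "(1 - w powr p) ^ t = (\<Sum>j\<le>t. real (t choose j) * (- (w powr p)) ^ j)"
      using binomial_ring[of "- (w powr p)" 1 t] by (simp add: mult_ac)
    ultimately show ?thesis
      by (simp add: sum_distrib_left power_minus[of "w powr p"] mult_ac)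
  qed
  moreover have "point_sum p t n * z ^ n =
      (\<Sum>j\<le>t. real (t choose j) * (-1) ^ j * (negbinom (- p * real (j + 1)) n * z ^ n))" for n
    by (simp add: point_sum_def sum_distrib_right mult.assoc)
  ultimately have "(\<lambda>n. point_sum p t n * z ^ n) sums (w powr (p - 1) * (1 - w powr p) ^ t)"
    by (simp only:)
  then show ?thesis by (simp only: w_def)
qed

lemma suminf_rows_sums_suminf_columns:
  fixes f :: "nat \<Rightarrow> nat \<Rightarrow> real"
  assumes rows: "\<And>n m. N n < m \<Longrightarrow> f n m = 0"
    and bound: "\<And>n. (\<Sum>m\<le>N n. \<bar>f n m\<bar>) \<le> c n" and c: "summable c"
    and columns: "\<And>m. (\<lambda>n. f n m) sums g m" and g: "summable (\<lambda>m. \<bar>g m\<bar>)"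
  shows "(\<lambda>n. \<Sum>m. f n m) sums (\<Sum>m. g m)"
proof -
  have row_has_sum: "(f n has_sum (\<Sum>m\<le>N n. f n m)) UNIV" for n
    by (rule has_sum_finite_neutralI[of "{..N n}"]) (auto simp: rows)
  have abs_row_has_sum: "((\<lambda>m. \<bar>f n m\<bar>) has_sum (\<Sum>m\<le>N n. \<bar>f n m\<bar>)) UNIV" for n
    by (rule has_sum_finite_neutralI[of "{..N n}"]) (auto simp: rows)
  have c_nonneg: "0 \<le> c n" for n
    by (rule order_trans[OF sum_nonneg bound]) simp
  have entry_bound: "\<bar>f n m\<bar> \<le> c n" for n m
  proof (cases "m \<le> N n")
    case True
    then have "\<bar>f n m\<bar> \<le> (\<Sum>m\<le>N n. \<bar>f n m\<bar>)"
      by (intro member_le_sum) auto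
    then show ?thesis using bound[of n] by linarith
  qed (simp add: rows c_nonneg)
  have c_summable_on: "c summable_on UNIV"
    using c c_nonneg by (intro norm_summable_imp_summable_on) simp
  have "(\<lambda>x. norm ((\<lambda>(n, m). f n m) x)) summable_on UNIV \<times> UNIV"
  proof (rule Infinite_Sum.abs_summable_on_Sigma_iff[THEN iffD2], intro conjI ballI)
    show "(\<lambda>m. norm ((\<lambda>(n, m). f n m) (n, m))) summable_on UNIV" for n
      using abs_row_has_sum[of n] by (auto simp: summable_on_def)
    show "(\<lambda>n. norm (\<Sum>\<^sub>\<infinity>m. norm ((\<lambda>(n, m). f n m) (n, m)))) summable_on UNIV"
      using c_summable_on bound
      by (intro Infinite_Sum.abs_summable_on_comparison_test')
         (simp_all add: infsumI[OF abs_row_has_sum] sum_nonneg)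
  qed
  then have swap: "(\<Sum>\<^sub>\<infinity>n. \<Sum>\<^sub>\<infinity>m. f n m) = (\<Sum>\<^sub>\<infinity>m. \<Sum>\<^sub>\<infinity>n. f n m)"
    by (rule infsum_swap_banach[OF Infinite_Sum.abs_summable_summable])
  have column_infsum: "(\<Sum>\<^sub>\<infinity>n. f n m) = g m" for m
  proof -
    have "summable (\<lambda>n. norm (f n m))"
      by (rule summable_comparison_test'[OF c]) (simp add: entry_bound)
    then show ?thesis by (intro infsumI norm_summable_imp_has_sum columns)
  qed
  have "summable g" using g by (rule summable_rabs_cancel)
  then have g_infsum: "(\<Sum>\<^sub>\<infinity>m. g m) = (\<Sum>m. g m)"
    using g by (intro infsumI norm_summable_imp_has_sum summable_sums) simp_all
  have row_suminf: "(\<Sum>m. f n m) = (\<Sum>\<^sub>\<infinity>m. f n m)" for n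
  proof -
    have "(\<Sum>m. f n m) = (\<Sum>m\<le>N n. f n m)"
      by (rule suminf_finite) (auto simp: rows not_le)
    then show ?thesis using infsumI[OF row_has_sum] by simp
  qed
  have "norm (\<Sum>m. f n m) \<le> c n" for n
  proof -
    have "\<bar>\<Sum>m\<le>N n. f n m\<bar> \<le> c n"
      using bound[of n] sum_abs[of "f n" "{..N n}"] by linarith
    then show ?thesis
      using row_suminf[of n] infsumI[OF row_has_sum[of n]] by simp
  qed
  then have "summable (\<lambda>n. norm (\<Sum>m. f n m))"
    by (intro summable_comparison_test'[OF c]) simp
  then have "(\<lambda>n. \<Sum>m. f n m) sums (\<Sum>\<^sub>\<infinity>n. \<Sum>m. f n m)"
    by (intro has_sum_imp_sums has_sum_infsum norm_summable_imp_summable_on)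
  then show ?thesis
    by (simp add: row_suminf swap column_infsum g_infsum)
qed

lemma D_generating_function:
  fixes z v :: real
  assumes p: "0 < p" "p \<le> 1" and z: "\<bar>z\<bar> < 1" and v: "\<bar>v\<bar> \<le> 1"
  shows "(\<lambda>n. \<Sum>m. pmf (D p (Suc n)) m * z ^ n * v ^ m) sums
           (v / (v * (1 - z) + (1 - v) * (1 - z) powr (1 - p)))"
proof -
  define w where "w = 1 - z"
  define q where "q = 1 - w powr p"
  have w: "0 < w" "w < 2" using z by (auto simp: w_def)
  have "w powr p < 2"
  proof -
    have "w powr p < 2 powr p" using w p by (intro powr_less_mono2) auto
    also have "\<dots> \<le> 2 powr 1" using p by (intro powr_mono) auto
    finally show ?thesis by simp
  qed
  moreover have "0 < w powr p" using w by simp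
  ultimately have "\<bar>q\<bar> < 1" unfolding q_def by linarith
  moreover have "\<bar>v\<bar> * \<bar>q\<bar> \<le> \<bar>q\<bar>" using v by (intro mult_left_le_one_le) auto
  ultimately have vq: "\<bar>v * q\<bar> < 1" by (simp add: abs_mult)
  have p01: "0 \<le> p" "p \<le> 1" using p by simp_all
  define g where "g m = (if m = 0 then 0 else v * w powr (p - 1) * (v * q) ^ (m - 1))" for m
  have columns: "(\<lambda>n. pmf (D p (Suc n)) m * z ^ n * v ^ m) sums g m" for m
  proof (cases m)
    case (Suc t)
    have "(\<lambda>n. v ^ m * (point_sum p t n * z ^ n)) sums (v ^ m * (w powr (p - 1) * q ^ t))"
      using point_sum_sums[OF z, of p t] by (intro sums_mult) (simp add: w_def q_def)
    then show ?thesis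
      by (simp add: Suc g_def pmf_D_Suc_Suc[OF p01] power_mult_distrib mult_ac)
  qed (simp add: g_def pmf_D_Suc_0[OF p01])
  have g_Suc: "g (Suc t) = v * w powr (p - 1) * (v * q) ^ t" for t
    by (simp add: g_def)
  have "(\<lambda>t. g (Suc t)) sums (v * w powr (p - 1) * (1 / (1 - v * q)))"
    unfolding g_Suc using vq by (intro sums_mult geometric_sums) simp
  then have g_sums: "g sums (v * w powr (p - 1) / (1 - v * q))"
    using sums_Suc[of g] by (simp add: g_def)
  have "summable (\<lambda>t. \<bar>g (Suc t)\<bar>)"
    unfolding g_Suc abs_mult power_abs using vq by (intro summable_mult summable_geometric) simp
  then have g_abs: "summable (\<lambda>m. \<bar>g m\<bar>)"
    by (subst summable_Suc_iff[symmetric])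
  have rows: "pmf (D p (Suc n)) m * z ^ n * v ^ m = 0" if "Suc n < m" for n m
    using set_pmf_D_Suc[of p n] that by (auto simp: pmf_eq_0_set_pmf)
  have bound: "(\<Sum>m\<le>Suc n. \<bar>pmf (D p (Suc n)) m * z ^ n * v ^ m\<bar>) \<le> \<bar>z\<bar> ^ n" for n
  proof -
    have "(\<Sum>m\<le>Suc n. \<bar>pmf (D p (Suc n)) m * z ^ n * v ^ m\<bar>)
        \<le> (\<Sum>m\<le>Suc n. pmf (D p (Suc n)) m) * \<bar>z\<bar> ^ n"
      unfolding sum_distrib_right using v
      by (intro sum_mono) (simp add: abs_mult power_abs mult_left_le power_le_one)
    also have "(\<Sum>m\<le>Suc n. pmf (D p (Suc n)) m) = 1"
      using set_pmf_D_Suc[of p n] by (intro sum_pmf_eq_1) auto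
    finally show ?thesis by simp
  qed
  have "(\<lambda>n. \<Sum>m. pmf (D p (Suc n)) m * z ^ n * v ^ m) sums (\<Sum>m. g m)"
    using z by (intro suminf_rows_sums_suminf_columns[OF rows bound _ columns g_abs]) simp_all
  moreover have "(\<Sum>m. g m) = v / (v * w + (1 - v) * w powr (1 - p))"
  proof -
    define A where "A = w powr (1 - p)"
    have "0 < A" using w by (simp add: A_def)
    have inv: "w powr (p - 1) = 1 / A"
      using w by (simp add: A_def powr_minus_divide[symmetric])
    have q: "q = 1 - w / A"
      using w \<open>0 < A\<close> by (simp add: q_def A_def field_simps flip: powr_add)
    have "1 - v * q \<noteq> 0" using vq by auto
    then have "v * w + (1 - v) * A \<noteq> 0"
      using \<open>0 < A\<close> by (simp add: q field_simps)
    have "(\<Sum>m. g m) = v * w powr (p - 1) / (1 - v * q)"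
      by (rule sums_unique[OF g_sums, symmetric])
    also have "\<dots> = v / (v * w + (1 - v) * A)"
      using \<open>0 < A\<close> \<open>1 - v * q \<noteq> 0\<close> \<open>v * w + (1 - v) * A \<noteq> 0\<close>
      unfolding inv q by (simp add: field_simps)
    finally show ?thesis by (simp add: A_def)
  qed
  ultimately show ?thesis by (simp add: w_def)
qed

theorem mainTheorem2:
  fixes p :: real
  assumes "0 < p" and "p < 1"
  shows "(\<forall>r n. 1 \<le> r \<longrightarrow> 1 \<le> n \<longrightarrow>
           measure_pmf.expectation (D p n) (\<lambda>d. falling (real d) r) =
           fact r * (\<Sum>j\<le>r - 1. real ((r - 1) choose j) * (-1) ^ (r - 1 - j) *
                       ((real n + p * real (j + 1) - 1) gchoose (n - 1))))
       \<and> (\<forall>r. 1 \<le> r \<longrightarrow>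
           (\<lambda>n. measure_pmf.expectation (D p n) (\<lambda>d. falling (real d) r))
             \<sim>[at_top] (\<lambda>n. fact r * real n powr (real r * p) / Gamma (real r * p + 1)))
       \<and> (\<forall>z v :: real. \<bar>z\<bar> < 1 \<longrightarrow> \<bar>v\<bar> \<le> 1 \<longrightarrow>
           (\<lambda>n. \<Sum>m. pmf (D p (Suc n)) m * z ^ n * v ^ m) sums
             (v / (v * (1 - z) + (1 - v) * (1 - z) powr (1 - p))))"
proof (intro conjI allI impI)
  have p: "0 \<le> p" "p \<le> 1" using assms by simp_all
  fix r n :: nat assume "1 \<le> r" "1 \<le> n"
  then obtain s k where r: "r = Suc s" and n: "n = Suc k"
    by (metis Suc_le_D One_nat_def)
  have "(real n + p * real (j + 1) - 1) gchoose (n - 1) = negbinom (p * real (j + 1)) k" for j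
    by (simp add: n negbinom_def add_ac)
  then show "measure_pmf.expectation (D p n) (\<lambda>d. falling (real d) r) =
           fact r * (\<Sum>j\<le>r - 1. real ((r - 1) choose j) * (-1) ^ (r - 1 - j) *
                       ((real n + p * real (j + 1) - 1) gchoose (n - 1)))"
    using factorial_moment_D[OF p, of k s] by (simp add: r n moment_sum_def del: fact_Suc)
next
  fix r :: nat assume "1 \<le> r"
  then obtain s where "r = Suc s" by (metis Suc_le_D One_nat_def)
  then show "(\<lambda>n. measure_pmf.expectation (D p n) (\<lambda>d. falling (real d) r))
             \<sim>[at_top] (\<lambda>n. fact r * real n powr (real r * p) / Gamma (real r * p + 1))"
    using factorial_moment_D_asymp[of p s] assms by simp
next
  fix z v :: real assume "\<bar>z\<bar> < 1" "\<bar>v\<bar> \<le> 1"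
  then show "(\<lambda>n. \<Sum>m. pmf (D p (Suc n)) m * z ^ n * v ^ m) sums
             (v / (v * (1 - z) + (1 - v) * (1 - z) powr (1 - p)))"
    using D_generating_function[of p z v] assms by simp
qed

end
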